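(* Let $S=\{0,1,\dots,p-1\}$ with $p\ge 2$, let $m\ge 2$, and let $f:S^m\to S$ be a local rule. If there exists no pair of replaceable local configurations and no pair of periodic local configurations for $f$, then the global map $\tau$ is injective.
   Context: A local configuration is a finite word over $S$. For a word $w=w_1w_2\cdots w_n$ with $n\ge m$, its successor under $f$ is the word $\hat f(w)=u_1\cdots u_{n-m+1}$ with $u_j=f(w_j,w_{j+1},\dots,w_{j+m-1})$. For $k\le n$, $\mathrm{left}_k(w)=w_1\cdots w_k$ and $\mathrm{right}_k(w)=w_{n-k+1}\cdots w_n$. The global map is $\tau:S^{\mathbb Z}\to S^{\mathbb Z}$, $\tau(c)(i)=f(c(i-L),\dots,c(i+R))$ for fixed integers $L,R\ge 0$ with $L+1+R=m$; the CA is (globally) injective if $\tau$ is injective. Two local configurations $\alpha,\beta$ of the same length $n$ are replaceable if: $n\ge 2m-1$; $\alpha\ne\beta$; $\mathrm{left}_{m-1}(\alpha)=\mathrm{left}_{m-1}(\beta)$; $\mathrm{right}_{m-1}(\alpha)=\mathrm{right}_{m-1}(\beta)$; and $\hat f(\alpha)=\hat f(\beta)$. They are periodic if: $n\ge m$; $\alpha\ne\beta$; $\mathrm{left}_{m-1}(\alpha)=\mathrm{right}_{m-1}(\alpha)$; $\mathrm{left}_{m-1}(\beta)=\mathrm{right}_{m-1}(\beta)$; and $\hat f(\alpha)=\hat f(\beta)$. *)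

theory Defs
  imports Main
begin

(* Words over S = {0..<p} are lists of naturals with entries < p.
   A local rule f : S^m -> S is a function on lists, used only on lists of length m. *)

definition word :: "nat \<Rightarrow> nat list \<Rightarrow> bool" where
  "word p w \<longleftrightarrow> (\<forall>x\<in>set w. x < p)"

definition local_rule :: "nat \<Rightarrow> nat \<Rightarrow> (nat list \<Rightarrow> nat) \<Rightarrow> bool" where
  "local_rule p m f \<longleftrightarrow> (\<forall>w. length w = m \<and> word p w \<longrightarrow> f w < p)"

definition succ_word :: "nat \<Rightarrow> (nat list \<Rightarrow> nat) \<Rightarrow> nat list \<Rightarrow> nat list" where
  "succ_word m f w = map (\<lambda>j. f (take m (drop j w))) [0..<length w - m + 1]"

definition left_k :: "nat \<Rightarrow> 'a list \<Rightarrow> 'a list" where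
  "left_k k w = take k w"

definition right_k :: "nat \<Rightarrow> 'a list \<Rightarrow> 'a list" where
  "right_k k w = drop (length w - k) w"

definition replaceable :: "nat \<Rightarrow> nat \<Rightarrow> (nat list \<Rightarrow> nat) \<Rightarrow> nat list \<Rightarrow> nat list \<Rightarrow> bool" where
  "replaceable p m f \<alpha> \<beta> \<longleftrightarrow>
     word p \<alpha> \<and> word p \<beta> \<and> length \<alpha> = length \<beta> \<and>
     length \<alpha> \<ge> 2*m - 1 \<and> \<alpha> \<noteq> \<beta> \<and>
     left_k (m-1) \<alpha> = left_k (m-1) \<beta> \<and> right_k (m-1) \<alpha> = right_k (m-1) \<beta> \<and>
     succ_word m f \<alpha> = succ_word m f \<beta>"

definition periodic_pair :: "nat \<Rightarrow> nat \<Rightarrow> (nat list \<Rightarrow> nat) \<Rightarrow> nat list \<Rightarrow> nat list \<Rightarrow> bool" where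
  "periodic_pair p m f \<alpha> \<beta> \<longleftrightarrow>
     word p \<alpha> \<and> word p \<beta> \<and> length \<alpha> = length \<beta> \<and>
     length \<alpha> \<ge> m \<and> \<alpha> \<noteq> \<beta> \<and>
     left_k (m-1) \<alpha> = right_k (m-1) \<alpha> \<and> left_k (m-1) \<beta> = right_k (m-1) \<beta> \<and>
     succ_word m f \<alpha> = succ_word m f \<beta>"

definition config :: "nat \<Rightarrow> (int \<Rightarrow> nat) \<Rightarrow> bool" where
  "config p c \<longleftrightarrow> (\<forall>i. c i < p)"

(* global map: \<tau>(c)(i) = f(c(i-L), ..., c(i+R)), with m = L+1+R *)
definition global_map :: "nat \<Rightarrow> nat \<Rightarrow> (nat list \<Rightarrow> nat) \<Rightarrow> (int \<Rightarrow> nat) \<Rightarrow> int \<Rightarrow> nat" where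
  "global_map m L f c i = f (map (\<lambda>j. c (i - int L + int j)) [0..<m])"

end

theory Submission
  imports Defs
begin

text \<open>Suppose two configurations c \<noteq> d have the same image, and differ at k.
  Track the pair of length-(m-1) windows of c and d at each position. Only finitely many
  such pairs exist, so on each side of k some pair repeats. A repeated pair with different
  components would cut out a pair of periodic local configurations with the same successor;
  hence c and d agree on a window left of k and on a window right of k. The stretch between
  these windows is then a pair of replaceable local configurations.\<close>

definition window :: "(int \<Rightarrow> nat) \<Rightarrow> int \<Rightarrow> nat \<Rightarrow> nat list" where
  "window c a n = map (\<lambda>j. c (a + int j)) [0..<n]"

lemma length_window [simp]: "length (window c a n) = n"
  by (simp add: window_def)

lemma nth_window [simp]: "j < n \<Longrightarrow> window c a n ! j = c (a + int j)"
  by (simp add: window_def)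

lemma word_window: "config p c \<Longrightarrow> word p (window c a n)"
  by (auto simp: word_def config_def window_def)

lemma left_k_window: "k \<le> n \<Longrightarrow> left_k k (window c a n) = window c a k"
  by (rule nth_equalityI) (auto simp: left_k_def)

lemma right_k_window: "k \<le> n \<Longrightarrow> right_k k (window c a n) = window c (a + int (n - k)) k"
  by (rule nth_equalityI) (auto simp: right_k_def nth_drop algebra_simps)

lemma take_drop_window: "j + m \<le> n \<Longrightarrow> take m (drop j (window c a n)) = window c (a + int j) m"
  by (rule nth_equalityI) (auto simp: nth_drop algebra_simps)

lemma succ_word_window:
  assumes "m \<le> n"
  shows "succ_word m f (window c a n) = map (\<lambda>j. global_map m L f c (a + int j + int L)) [0..<n-m+1]"
proof (rule nth_equalityI)
  fix j assume "j < length (succ_word m f (window c a n))"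
  then have j: "j < n - m + 1" by (simp add: succ_word_def)
  have "global_map m L f c (a + int j + int L) = f (window c (a + int j) m)"
    by (simp add: global_map_def window_def algebra_simps)
  with j assms show "succ_word m f (window c a n) ! j = map (\<lambda>j. global_map m L f c (a + int j + int L)) [0..<n-m+1] ! j"
    by (simp add: succ_word_def take_drop_window del: upt_Suc)
qed (simp add: succ_word_def)

lemma window_neqI:
  assumes "a \<le> k" "k < a + int n" "c k \<noteq> d k"
  shows "window c a n \<noteq> window d a n"
proof
  assume "window c a n = window d a n"
  moreover have "nat (k - a) < n" using assms by linarith
  ultimately have "window c a n ! nat (k - a) = window d a n ! nat (k - a)" by simp
  with assms \<open>nat (k - a) < n\<close> show False by simp
qed

lemma finite_range_window: "config p c \<Longrightarrow> finite (range (\<lambda>i. window c i n))"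
  by (rule finite_subset[OF _ finite_lists_length_eq[of "{..<p}" n]])
     (auto simp: config_def window_def)

context
  fixes p m L :: nat and f :: "nat list \<Rightarrow> nat" and c d :: "int \<Rightarrow> nat"
  assumes m_pos: "1 \<le> m"
    and config_c: "config p c" and config_d: "config p d"
    and same_image: "global_map m L f c = global_map m L f d"
begin

lemma succ_word_window_eq: "m \<le> n \<Longrightarrow> succ_word m f (window c a n) = succ_word m f (window d a n)"
  using succ_word_window[of m n f c a L] succ_word_window[of m n f d a L] same_image by simp

lemma window_eq_of_repeated_pair:
  assumes no_periodic: "\<not> (\<exists>\<alpha> \<beta>. periodic_pair p m f \<alpha> \<beta>)"
    and "i \<noteq> j"
    and c_rep: "window c i (m - 1) = window c j (m - 1)"
    and d_rep: "window d i (m - 1) = window d j (m - 1)"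
  shows "window c i (m - 1) = window d i (m - 1)"
proof -
  define M where "M = m - 1"
  have agree: "window c i M = window d i M"
    if "i < j" "window c i M = window c j M" "window d i M = window d j M" for i j
  proof (rule ccontr)
    assume ne: "window c i M \<noteq> window d i M"
    define n where "n = nat (j - i) + M"
    have "m \<le> n" "M \<le> n" using \<open>i < j\<close> m_pos by (simp_all add: n_def M_def)
    have shift: "i + int (n - M) = j" using \<open>i < j\<close> by (simp add: n_def)
    have "periodic_pair p m f (window c i n) (window d i n)"
      unfolding periodic_pair_def M_def[symmetric]
    proof (intro conjI)
      show "window c i n \<noteq> window d i n"
      proof
        assume "window c i n = window d i n"
        then have "left_k M (window c i n) = left_k M (window d i n)" by simp
        with ne show False by (simp add: left_k_window \<open>M \<le> n\<close>)
      qed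
      show "left_k M (window c i n) = right_k M (window c i n)"
        using that(2) by (simp only: left_k_window[OF \<open>M \<le> n\<close>] right_k_window[OF \<open>M \<le> n\<close>] shift)
      show "left_k M (window d i n) = right_k M (window d i n)"
        using that(3) by (simp only: left_k_window[OF \<open>M \<le> n\<close>] right_k_window[OF \<open>M \<le> n\<close>] shift)
      show "word p (window c i n)" "word p (window d i n)"
        using config_c config_d by (simp_all add: word_window)
      show "succ_word m f (window c i n) = succ_word m f (window d i n)"
        using \<open>m \<le> n\<close> by (rule succ_word_window_eq)
    qed (simp_all add: \<open>m \<le> n\<close>)
    with no_periodic show False by auto
  qed
  from \<open>i \<noteq> j\<close> consider "i < j" | "j < i" by linarith
  then show ?thesis
  proof cases
    case 1
    then show ?thesis using agree[of i j] c_rep d_rep by (simp add: M_def)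
  next
    case 2
    then show ?thesis using agree[of j i] c_rep d_rep by (simp add: M_def)
  qed
qed

lemma exists_agreeing_window:
  fixes h :: "nat \<Rightarrow> int"
  assumes no_periodic: "\<not> (\<exists>\<alpha> \<beta>. periodic_pair p m f \<alpha> \<beta>)"
    and "inj h"
  shows "\<exists>n. window c (h n) (m - 1) = window d (h n) (m - 1)"
proof -
  let ?pair = "\<lambda>n. (window c (h n) (m - 1), window d (h n) (m - 1))"
  have "finite (range (\<lambda>i. window c i (m - 1)) \<times> range (\<lambda>i. window d i (m - 1)))"
    using finite_range_window[OF config_c] finite_range_window[OF config_d]
    by (rule finite_cartesian_product)
  moreover have "range ?pair \<subseteq> range (\<lambda>i. window c i (m - 1)) \<times> range (\<lambda>i. window d i (m - 1))"
    by auto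
  ultimately have "finite (range ?pair)"
    by (rule finite_subset[rotated])
  then have "\<not> inj ?pair"
    using finite_imageD infinite_UNIV_nat by blast
  then obtain a b where "a \<noteq> b" and same_pair: "?pair a = ?pair b"
    unfolding inj_def by auto
  from \<open>a \<noteq> b\<close> \<open>inj h\<close> have "h a \<noteq> h b" by (simp add: inj_eq)
  then have "window c (h a) (m - 1) = window d (h a) (m - 1)"
    by (rule window_eq_of_repeated_pair[OF no_periodic]) (use same_pair in simp_all)
  then show ?thesis ..
qed

lemma eq_of_no_replaceable_no_periodic:
  assumes no_replaceable: "\<not> (\<exists>\<alpha> \<beta>. replaceable p m f \<alpha> \<beta>)"
    and no_periodic: "\<not> (\<exists>\<alpha> \<beta>. periodic_pair p m f \<alpha> \<beta>)"
  shows "c = d"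
proof (rule ccontr)
  assume "c \<noteq> d"
  then obtain k where k: "c k \<noteq> d k" by auto
  define M where "M = m - 1"
  obtain a where a: "window c (k - int M - 1 - int a) M = window d (k - int M - 1 - int a) M"
    using exists_agreeing_window[OF no_periodic, of "\<lambda>n. k - int M - 1 - int n"]
    by (auto simp: inj_def M_def)
  obtain b where b: "window c (k + 1 + int b) M = window d (k + 1 + int b) M"
    using exists_agreeing_window[OF no_periodic, of "\<lambda>n. k + 1 + int n"]
    by (auto simp: inj_def M_def)
  define i where "i = k - int M - 1 - int a"
  define n where "n = nat (k + 1 + int b - i) + M"
  have "M \<le> n" "2 * m - 1 \<le> n" using m_pos by (simp_all add: n_def i_def M_def)
  have shift: "i + int (n - M) = k + 1 + int b" by (simp add: n_def i_def)
  have "replaceable p m f (window c i n) (window d i n)"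
    unfolding replaceable_def M_def[symmetric]
  proof (intro conjI)
    show "window c i n \<noteq> window d i n"
      by (rule window_neqI[of i k n c d]) (use k in \<open>simp_all add: i_def n_def\<close>)
    show "left_k M (window c i n) = left_k M (window d i n)"
      using a by (simp add: left_k_window \<open>M \<le> n\<close> i_def)
    show "right_k M (window c i n) = right_k M (window d i n)"
      using b shift by (simp add: right_k_window \<open>M \<le> n\<close>)
    show "succ_word m f (window c i n) = succ_word m f (window d i n)"
      using \<open>2 * m - 1 \<le> n\<close> m_pos by (intro succ_word_window_eq) simp
  qed (use \<open>2 * m - 1 \<le> n\<close> word_window config_c config_d in auto)
  with no_replaceable show False by auto
qed

end

theorem lemma4:
  fixes p m L R :: nat and f :: "nat list \<Rightarrow> nat"
  assumes "p \<ge> 2" and "m \<ge> 2" and "L + 1 + R = m"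
    and "local_rule p m f"
    and "\<not> (\<exists>\<alpha> \<beta>. replaceable p m f \<alpha> \<beta>)"
    and "\<not> (\<exists>\<alpha> \<beta>. periodic_pair p m f \<alpha> \<beta>)"
  shows "inj_on (global_map m L f) {c. config p c}"
proof (rule inj_onI)
  fix c d assume "c \<in> {c. config p c}" "d \<in> {c. config p c}"
    and "global_map m L f c = global_map m L f d"
  with assms(2,5,6) show "c = d"
    by (intro eq_of_no_replaceable_no_periodic[of m p c d L f]) auto
qed

end
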